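(* Let $R$ be a ring and let $I,J$ be ideals of $R$ with $I\cap J=0$. Let $x\in I$ and $y\in J$. Then for all $\theta,\theta'\in\widehat\Theta(R)$, $\theta(x)\cdot\theta'(y)=0$.
   Context: Rings are commutative with unit. $\widehat\Theta(R)$ is the free monoid generated by the set $\mathrm{Der}(R)$ of all derivations of $R$; a word $\delta_1\cdots\delta_n$ acts on $R$ as the composition $\delta_1\circ\cdots\circ\delta_n$ (the empty word acting as the identity). *)

theory Defs
  imports Main
begin

definition is_ideal :: "'a::comm_ring_1 set \<Rightarrow> bool" where
  "is_ideal I \<longleftrightarrow> 0 \<in> I \<and> (\<forall>a\<in>I. \<forall>b\<in>I. a + b \<in> I) \<and> (\<forall>a\<in>I. - a \<in> I)
     \<and> (\<forall>r a. a \<in> I \<longrightarrow> r * a \<in> I)"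

definition Der :: "('a::comm_ring_1 \<Rightarrow> 'a) set" where
  "Der = {d. (\<forall>a b. d (a + b) = d a + d b) \<and> (\<forall>a b. d (a * b) = a * d b + d a * b)}"

text \<open>Elements of the free monoid on Der(R) are lists (words) of derivations;
  the word d1 ... dn acts as d1 o ... o dn, the empty word as the identity.\<close>
definition Theta_hat :: "('a::comm_ring_1 \<Rightarrow> 'a) list set" where
  "Theta_hat = {ds. set ds \<subseteq> Der}"

definition word_act :: "('a \<Rightarrow> 'a) list \<Rightarrow> 'a \<Rightarrow> 'a" where
  "word_act ds = foldr (\<circ>) ds id"

end

theory Submission
  imports Defs
begin

text \<open>Induction on the total length of the two words. Applying a derivation to a vanishing
  product shows that moving a derivation from one factor to the other only changes the
  sign. So once all products of total length \<open>n\<close> vanish, a product of total length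
  \<open>n + 1\<close> equals, up to sign, \<open>x \<cdot> \<theta>(y) \<in> I\<close> and also \<open>\<theta>(x) \<cdot> y \<in> J\<close>, hence is \<open>0\<close>.\<close>

lemma is_ideal_mult_left: "is_ideal I \<Longrightarrow> a \<in> I \<Longrightarrow> r * a \<in> I"
  by (simp add: is_ideal_def)

lemma is_ideal_mult_right: "is_ideal I \<Longrightarrow> a \<in> I \<Longrightarrow> a * r \<in> I"
  using is_ideal_mult_left[of I a r] by (simp add: mult.commute)

lemma is_ideal_uminus: "is_ideal I \<Longrightarrow> a \<in> I \<Longrightarrow> - a \<in> I"
  by (simp add: is_ideal_def)

lemma Der_zero: "d \<in> Der \<Longrightarrow> d 0 = 0"
proof -
  assume "d \<in> Der"
  then have "d (0 + 0) = d 0 + d 0" unfolding Der_def by blast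
  then show ?thesis by simp
qed

lemma Der_mult_eq_0:
  assumes "d \<in> Der" and "u * v = 0"
  shows "d u * v = - (u * d v)"
proof -
  have "d (u * v) = u * d v + d u * v" using assms(1) by (simp add: Der_def)
  then have "u * d v + d u * v = 0" using assms Der_zero by metis
  then show ?thesis by (simp add: eq_neg_iff_add_eq_0 add.commute)
qed

lemma word_act_Nil [simp]: "word_act [] z = z"
  by (simp add: word_act_def)

lemma word_act_Cons [simp]: "word_act (d # ds) z = d (word_act ds z)"
  by (simp add: word_act_def)

lemma word_act_mult_in_ideal:
  assumes I: "is_ideal I" and x: "x \<in> I"
    and vanish: "\<And>a b. set a \<subseteq> Der \<Longrightarrow> set b \<subseteq> Der \<Longrightarrow> length a + length b = n
      \<Longrightarrow> word_act a x * word_act b y = 0"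
  shows "set a \<subseteq> Der \<Longrightarrow> set b \<subseteq> Der \<Longrightarrow> length a + length b = Suc n
      \<Longrightarrow> word_act a x * word_act b y \<in> I"
proof (induction a arbitrary: b)
  case Nil
  then show ?case using is_ideal_mult_right[OF I x] by simp
next
  case (Cons d a)
  have "word_act a x * word_act b y = 0" using vanish Cons.prems by simp
  then have "word_act (d # a) x * word_act b y = - (word_act a x * word_act (d # b) y)"
    using Der_mult_eq_0[of d] Cons.prems by simp
  moreover have "word_act a x * word_act (d # b) y \<in> I"
    using Cons.IH[of "d # b"] Cons.prems by simp
  ultimately show ?case using is_ideal_uminus[OF I] by simp
qed

theorem lemmaA14:
  fixes I J :: "'a::comm_ring_1 set" and x y :: 'a
  assumes "is_ideal I" and "is_ideal J" and "I \<inter> J = {0}"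
    and "x \<in> I" and "y \<in> J"
  shows "\<forall>\<theta>\<in>Theta_hat. \<forall>\<theta>'\<in>Theta_hat. word_act \<theta> x * word_act \<theta>' y = 0"
proof -
  have "set a \<subseteq> Der \<Longrightarrow> set b \<subseteq> Der \<Longrightarrow> length a + length b = n
      \<Longrightarrow> word_act a x * word_act b y = 0" for n a b
  proof (induction n arbitrary: a b)
    case 0
    have "x * y \<in> I \<inter> J"
      using is_ideal_mult_right[OF assms(1,4)] is_ideal_mult_left[OF assms(2,5)] by blast
    then show ?case using 0 assms(3) by simp
  next
    case (Suc n)
    have "word_act a x * word_act b y \<in> I"
      using word_act_mult_in_ideal[OF assms(1,4) Suc.IH Suc.prems] .
    moreover have "word_act b y * word_act a x \<in> J"
    proof (rule word_act_mult_in_ideal[OF assms(2,5)])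
      show "word_act b' y * word_act a' x = 0"
        if "set b' \<subseteq> Der" "set a' \<subseteq> Der" "length b' + length a' = n" for a' b'
        using Suc.IH[of a' b'] that by (simp add: mult.commute)
    qed (use Suc.prems in auto)
    ultimately show ?case using assms(3) by (auto simp: mult.commute)
  qed
  then show ?thesis by (auto simp: Theta_hat_def)
qed

end
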